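(* Let $a,b\in GF(q)\setminus\{0\}$ and let $\mu\in GF(q)$ satisfy $\mu^2=\frac ba\neq1$. For every point $P\in\mathcal B_a$ there are exactly two circles $g,h\in\tau(a,b)$ that are tangential to $\mathcal B_a$ in $P$. Moreover, $g$ is tangential to $\mathcal B_b$ in $\mu P$ and $h$ is tangential to $\mathcal B_b$ in $-\mu P$.
   Context: Let $p$ be an odd prime, $m\ge1$, and $q=p^m$. $GF(q^2)$ denotes the quadratic extension of $GF(q)$, and for $z\in GF(q^2)$ we write $\bar z:=z^{q}$. The Miquelian Möbius plane $\mathbb M(q)$ has point set $GF(q^2)\cup\{\infty\}$ and circles of two types: for $s\in GF(q^2)$ and $c\in GF(q)\setminus\{0\}$, the circle of the first type $\mathcal B^1_{(s,c)}=\{z\in GF(q^2):(z-s)(\bar z-\bar s)=c\}$; for $s\in GF(q^2)\setminus\{0\}$ and $c\in GF(q)$, the circle of the second type $\mathcal B^2_{(s,c)}=\{z\in GF(q^2):\bar s z+s\bar z=c\}\cup\{\infty\}$. Two circles are called tangential if they have exactly one point in common; a circle $g$ is tangential to a circle $\mathcal B$ in $P$ if $g\cap\mathcal B=\{P\}$. For $a\in GF(q)\setminus\{0\}$ put $\mathcal B_a:=\mathcal B^1_{(0,a)}$, and for $a,b\in GF(q)\setminus\{0\}$ let $\tau(a,b)$ be the set of circles tangential to both $\mathcal B_a$ and $\mathcal B_b$. *)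

theory Defs
  imports Main "HOL-Computational_Algebra.Primes"
begin

text \<open>GF(q^2) is modelled as a finite field type 'a with CARD('a) = q^2.
  Points of the Moebius plane: 'a option, None = infinity, Some z = z.\<close>

definition conjq :: "nat \<Rightarrow> 'a::field \<Rightarrow> 'a" where
  "conjq q z = z ^ q"

definition GFsub :: "nat \<Rightarrow> 'a::field set" where
  "GFsub q = {x. x ^ q = x}"

definition circle1 :: "nat \<Rightarrow> 'a::field \<Rightarrow> 'a \<Rightarrow> 'a option set" where
  "circle1 q s c = {Some z | z. (z - s) * (conjq q z - conjq q s) = c}"

definition circle2 :: "nat \<Rightarrow> 'a::field \<Rightarrow> 'a \<Rightarrow> 'a option set" where
  "circle2 q s c = insert None {Some z | z. conjq q s * z + s * conjq q z = c}"

definition is_circle :: "nat \<Rightarrow> 'a::field option set \<Rightarrow> bool" where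
  "is_circle q g \<longleftrightarrow>
     (\<exists>s c. c \<in> GFsub q \<and> c \<noteq> 0 \<and> g = circle1 q s c) \<or>
     (\<exists>s c. s \<noteq> 0 \<and> c \<in> GFsub q \<and> g = circle2 q s c)"

definition tangential :: "'a option set \<Rightarrow> 'a option set \<Rightarrow> bool" where
  "tangential g B \<longleftrightarrow> (\<exists>P. g \<inter> B = {P})"

definition tangent_at :: "'a option set \<Rightarrow> 'a option set \<Rightarrow> 'a option \<Rightarrow> bool" where
  "tangent_at g B P \<longleftrightarrow> g \<inter> B = {P}"

definition Bcirc :: "nat \<Rightarrow> 'a::field \<Rightarrow> 'a option set" where
  "Bcirc q a = circle1 q 0 a"

definition tau :: "nat \<Rightarrow> 'a::field \<Rightarrow> 'a \<Rightarrow> 'a option set set" where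
  "tau q a b = {g. is_circle q g \<and> tangential g (Bcirc q a) \<and> tangential g (Bcirc q b)}"

end

theory Submission
  imports Defs "HOL-Number_Theory.Residues"
begin

text \<open>
  Every circle \<open>k\<close> through \<open>z \<in> B\<^sub>a\<close> has a centre (first type) or a normal direction (second
  type) \<open>s\<close>, and the reflection \<open>w \<mapsto> s w\<^sup>q / s\<^sup>q\<close> in the line through \<open>0\<close> and \<open>s\<close> preserves \<open>k\<close>
  and every \<open>B\<^sub>c\<close>. Hence if \<open>k\<close> meets \<open>B\<^sub>c\<close> in a single point, that point lies on the line
  through \<open>0\<close> and \<open>s\<close>. Applied to \<open>B\<^sub>a\<close> and \<open>B\<^sub>b\<close> this excludes circles of the second type and
  shows that a circle of the first type tangent to \<open>B\<^sub>a\<close> at \<open>z\<close> is the circle \<open>C\<^sub>t\<close> with centre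
  \<open>t z\<close> through \<open>z\<close>, for some \<open>t \<in> GF(q)\<close>. A point \<open>w \<in> B\<^sub>c\<close> lies on \<open>C\<^sub>t\<close> iff
  \<open>u = z\<^sup>q w\<close> has norm \<open>u u\<^sup>q = a c\<close> and trace \<open>t (u + u\<^sup>q) = c - a + 2 t a\<close>. For
  \<open>c = b = \<mu>\<^sup>2 a\<close>, tangency forces \<open>u \<in> GF(q)\<close>, so \<open>u = \<plusminus>\<mu> a\<close> and \<open>2 t = 1 \<plusminus> \<mu>\<close>;
  conversely, for these two values of \<open>t\<close> the norm and trace determine \<open>u = \<plusminus>\<mu> a\<close>, i.e.
  the single common point \<open>w = \<plusminus>\<mu> z\<close>.
\<close>

lemma power_card_eq_self:
  fixes x :: "'a::{field,finite}"
  shows "x ^ card (UNIV :: 'a set) = x"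
proof (cases "x = 0")
  case True
  then show ?thesis
    by (simp add: finite_UNIV_card_ge_0)
next
  case False
  define U where "U = UNIV - {0::'a}"
  have "finite U" and card_U: "Suc (card U) = card (UNIV :: 'a set)"
    by (simp_all add: U_def card_Diff_singleton finite_UNIV_card_ge_0)
  have "bij_betw ((*) x) U U"
    by (rule bij_betwI[of _ _ _ "\<lambda>y. y / x"]) (use False in \<open>auto simp: U_def\<close>)
  then have "prod ((*) x) U = prod id U"
    using prod.reindex_bij_betw[of "(*) x" U U id] by simp
  moreover have "prod ((*) x) U = x ^ card U * prod id U"
    by (simp add: prod.distrib)
  moreover have "prod id U \<noteq> 0"
    using \<open>finite U\<close> by (simp add: U_def)
  ultimately have "x ^ card U = 1"
    by simp
  then show ?thesis
    by (simp flip: card_U)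
qed

lemma CHAR_eq_prime_of_card:
  assumes "prime p" and "card (UNIV :: 'a::{field,finite} set) = p ^ n"
  shows "CHAR('a) = p"
proof -
  have "prime CHAR('a)"
    by (rule prime_CHAR_semidom) (simp add: finite_imp_CHAR_pos)
  moreover have "CHAR('a) dvd p ^ n"
    using CHAR_dvd_CARD[where 'a='a] assms(2) by simp
  ultimately show ?thesis
    using assms(1) prime_dvd_power primes_dvd_imp_eq by blast
qed

text \<open>Only these properties of \<open>z \<mapsto> z\<^sup>q\<close> on \<open>GF(q\<^sup>2)\<close> are used; \<open>GF(q)\<close> is its fixed field.\<close>
locale field_conjugation =
  fixes q :: nat
  assumes conj_add: "\<And>x y :: 'a::field. (x + y) ^ q = x ^ q + y ^ q"
    and conj_conj: "\<And>x :: 'a. (x ^ q) ^ q = x"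
    and two_nonzero: "(2::'a) \<noteq> 0"

lemma field_conjugation_of_card:
  assumes "prime p" and "odd p" and "q = p ^ m"
    and card: "card (UNIV :: 'a::{field,finite} set) = q ^ 2"
  shows "field_conjugation TYPE('a) q"
proof
  have char: "CHAR('a) = p"
    using CHAR_eq_prime_of_card[OF assms(1)] card assms(3) by (simp flip: power_mult)
  show "(x + y) ^ q = x ^ q + y ^ q" for x y :: 'a
    using char assms(1,3) by (intro freshmans_dream'[where n = m]) simp_all
  show "(x ^ q) ^ q = x" for x :: 'a
    using power_card_eq_self[of x] card by (simp flip: power_mult add: power2_eq_square)
  have "\<not> p dvd 2"
    using assms(2) primes_dvd_imp_eq[OF assms(1) two_is_prime_nat] by auto
  then show "(2::'a) \<noteq> 0"
    using of_nat_eq_0_iff_char_dvd[of 2, where 'a='a] char by simp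
qed

lemma Some_in_circle1_iff: "Some w \<in> circle1 q s c \<longleftrightarrow> (w - s) * (w ^ q - s ^ q) = c"
  by (auto simp: circle1_def conjq_def)

lemma Some_in_circle2_iff: "Some w \<in> circle2 q s c \<longleftrightarrow> s ^ q * w + s * w ^ q = c"
  by (auto simp: circle2_def conjq_def)

lemma None_notin_Bcirc: "None \<notin> Bcirc q a"
  by (auto simp: Bcirc_def circle1_def)

lemma tangential_BcircE:
  assumes "tangential k (Bcirc q b)"
  obtains w where "k \<inter> Bcirc q b = {Some w}"
proof -
  obtain P where P: "k \<inter> Bcirc q b = {P}"
    using assms by (auto simp: tangential_def)
  then obtain w where "P = Some w"
    using None_notin_Bcirc by (cases P) auto
  with P show thesis
    using that by simp
qed

lemma is_circle_cases:
  assumes "is_circle q k"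
  obtains (origin) c where "k = Bcirc q c"
    | (circle) s c where "s \<noteq> 0" and "k = circle1 q s c"
    | (line) s c where "s \<noteq> 0" and "k = circle2 q s c"
proof -
  from assms consider (c1) s c where "k = circle1 q s c"
    | (c2) s c where "s \<noteq> 0" and "k = circle2 q s c"
    unfolding is_circle_def by blast
  then show thesis
  proof cases
    case (c1 s c)
    then show thesis
      using origin circle by (cases "s = 0") (simp_all add: Bcirc_def)
  next
    case (c2 s c)
    then show thesis
      by (rule line)
  qed
qed

definition line_reflection :: "nat \<Rightarrow> 'a::field \<Rightarrow> 'a \<Rightarrow> 'a" where
  "line_reflection q s w = s * w ^ q / s ^ q"

text \<open>For \<open>z \<in> B\<^sub>a\<close>, the circle with centre \<open>t z\<close> through \<open>z\<close>.\<close>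
definition tangent_circle :: "nat \<Rightarrow> 'a::field \<Rightarrow> 'a \<Rightarrow> 'a \<Rightarrow> 'a option set" where
  "tangent_circle q a z t = circle1 q (t * z) ((1 - t) ^ 2 * a)"

lemma tangent_parameter_cases:
  fixes a t u \<mu> :: "'a::field"
  assumes "(2::'a) \<noteq> 0" and "\<mu> \<noteq> 1" and "\<mu> \<noteq> -1" and "a \<noteq> 0"
    and tu: "2 * t * u = \<mu>\<^sup>2 * a - a + 2 * t * a" and u: "u\<^sup>2 = a * (\<mu>\<^sup>2 * a)"
  shows "t = (1 + \<mu>) / 2 \<or> t = (1 - \<mu>) / 2"
proof -
  have "(u - \<mu> * a) * (u + \<mu> * a) = 0"
    using u by (simp add: algebra_simps power2_eq_square)
  then consider "u = \<mu> * a" | "u = - (\<mu> * a)"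
    by (auto simp: eq_neg_iff_add_eq_0)
  then show ?thesis
  proof cases
    case 1
    then have "a * ((\<mu> - 1) * (2 * t - (1 + \<mu>))) = 0"
      using tu by (simp add: algebra_simps power2_eq_square)
    then have "2 * t = 1 + \<mu>"
      using assms(2,4) by simp
    then show ?thesis
      using assms(1) by (simp add: field_simps)
  next
    case 2
    then have "a * ((\<mu> + 1) * (2 * t - (1 - \<mu>))) = 0"
      using tu by (simp add: algebra_simps power2_eq_square)
    then have "2 * t = 1 - \<mu>"
      using assms(3,4) by (simp add: add_eq_0_iff2)
    then show ?thesis
      using assms(1) by (simp add: field_simps)
  qed
qed

context field_conjugation
begin

lemma conj_exponent_pos: "q > 0"
proof (rule ccontr)
  assume "\<not> q > 0"
  then show False
    using conj_conj[of 0] by simp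
qed

lemma conj_zero [simp]: "(0::'a) ^ q = 0"
  using conj_exponent_pos by simp

lemma conj_eq_0_iff [simp]: "(x::'a) ^ q = 0 \<longleftrightarrow> x = 0"
  using conj_exponent_pos by simp

lemma conj_minus [simp]: "(- x :: 'a) ^ q = - (x ^ q)"
  using conj_add[of x "- x"] by (simp add: eq_neg_iff_add_eq_0 add.commute)

lemma conj_diff [simp]: "(x - y :: 'a) ^ q = x ^ q - y ^ q"
  using conj_add[of x "- y"] by simp

lemma conj_two [simp]: "(2::'a) ^ q = 2"
  using conj_add[of 1 1] by simp

lemma ratio_conj_fixed:
  assumes "z \<noteq> 0" and "s * z ^ q = s ^ q * (z::'a)"
  shows "(s / z) ^ q = s / z"
  using assms by (simp add: field_simps)

lemma half_sum_eq_iff: "(1 + \<nu>) / 2 = x \<longleftrightarrow> \<nu> = 2 * x - (1::'a)"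
  using two_nonzero by (auto simp: field_simps)

lemma half_sum_conj_fixed: "\<nu> ^ q = \<nu> \<Longrightarrow> ((1 + \<nu>) / 2) ^ q = (1 + \<nu>) / (2::'a)"
  by (simp add: power_divide conj_add)

text \<open>\<open>v\<close> and \<open>v\<^sup>q\<close> are the roots of \<open>(X - r)\<^sup>2\<close>.\<close>
lemma eq_of_trace_norm:
  fixes v r :: 'a
  assumes "v + v ^ q = 2 * r" and "v * v ^ q = r\<^sup>2" and "r ^ q = r"
  shows "v = r"
proof -
  have "(v - r) * (v ^ q - r) = v * v ^ q - r * (v + v ^ q) + r\<^sup>2"
    by (simp add: algebra_simps power2_eq_square)
  also have "\<dots> = 0"
    using assms(1,2) by (simp add: power2_eq_square)
  finally consider "v = r" | "v ^ q = r"
    by auto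
  then show ?thesis
    by cases (use conj_conj[of v] assms(3) in auto)
qed

lemma Some_in_Bcirc_iff: "Some w \<in> Bcirc q a \<longleftrightarrow> w * w ^ q = (a::'a)"
  by (simp add: Bcirc_def Some_in_circle1_iff)

lemma line_reflection_conj_pairing:
  assumes "s \<noteq> (0::'a)"
  shows "s ^ q * line_reflection q s w = s * w ^ q"
    and "s * (line_reflection q s w) ^ q = s ^ q * w"
proof -
  have "s ^ q \<noteq> 0"
    using assms by simp
  then show "s ^ q * line_reflection q s w = s * w ^ q"
    by (simp add: line_reflection_def)
  have "(line_reflection q s w) ^ q = s ^ q * w / s"
    by (simp add: line_reflection_def power_mult_distrib power_divide conj_conj)
  then show "s * (line_reflection q s w) ^ q = s ^ q * w"
    using assms by simp
qed

lemma line_reflection_norm: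
  assumes "s \<noteq> (0::'a)"
  shows "line_reflection q s w * (line_reflection q s w) ^ q = w * w ^ q"
proof -
  have "(s ^ q * s) * (line_reflection q s w * (line_reflection q s w) ^ q)
      = (s ^ q * line_reflection q s w) * (s * (line_reflection q s w) ^ q)"
    by (simp only: mult_ac)
  also have "\<dots> = (s ^ q * s) * (w * w ^ q)"
    by (simp only: line_reflection_conj_pairing[OF assms] mult_ac)
  finally show ?thesis
    using assms by (simp only: mult_left_cancel mult_eq_0_iff conj_eq_0_iff simp_thms)
qed

lemma line_reflection_Bcirc:
  "s \<noteq> 0 \<Longrightarrow> Some w \<in> Bcirc q a \<Longrightarrow> Some (line_reflection q s w) \<in> Bcirc q (a::'a)"
  by (simp add: Some_in_Bcirc_iff line_reflection_norm)

lemma line_reflection_circle: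
  assumes "s \<noteq> 0" and "k = circle1 q s c \<or> k = circle2 q s (c::'a)" and "Some w \<in> k"
  shows "Some (line_reflection q s w) \<in> k"
  using assms(2)
proof
  assume k: "k = circle1 q s c"
  have "(line_reflection q s w - s) * ((line_reflection q s w) ^ q - s ^ q)
      = line_reflection q s w * (line_reflection q s w) ^ q
        - s * (line_reflection q s w) ^ q - s ^ q * line_reflection q s w + s * s ^ q"
    by (simp add: algebra_simps)
  also have "\<dots> = (w - s) * (w ^ q - s ^ q)"
    using assms(1) by (simp add: line_reflection_norm line_reflection_conj_pairing algebra_simps)
  finally show ?thesis
    using assms(3) k by (simp add: Some_in_circle1_iff)
next
  assume "k = circle2 q s c"
  then show ?thesis
    using assms by (simp add: Some_in_circle2_iff line_reflection_conj_pairing add.commute)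
qed

text \<open>The reflection fixes the only common point of \<open>k\<close> and \<open>B\<^sub>a\<close>, which therefore lies on the
  line through \<open>0\<close> and \<open>s\<close>.\<close>
lemma unique_common_point_on_line:
  assumes "s \<noteq> 0" and "k = circle1 q s c \<or> k = circle2 q s (c::'a)"
    and "k \<inter> Bcirc q a = {Some w}"
  shows "s * w ^ q = s ^ q * w"
proof -
  have "Some w \<in> k" and "Some w \<in> Bcirc q a"
    using assms(3) by auto
  then have "Some (line_reflection q s w) \<in> k \<inter> Bcirc q a"
    using line_reflection_circle[OF assms(1,2)] line_reflection_Bcirc[OF assms(1)] by blast
  then have "line_reflection q s w = w"
    using assms(3) by blast
  then show ?thesis
    using line_reflection_conj_pairing(1)[OF assms(1), of w] by (simp only: mult.commute)
qed

lemma Some_in_tangent_circle_iff: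
  "t ^ q = t \<Longrightarrow>
    Some w \<in> tangent_circle q a z t \<longleftrightarrow> (w - t * z) * (w ^ q - t * z ^ q) = (1 - t)\<^sup>2 * a"
  by (simp add: tangent_circle_def Some_in_circle1_iff power_mult_distrib)

lemma tangent_circle_is_circle:
  assumes "t ^ q = t" and "t \<noteq> 1" and "a ^ q = a" and "a \<noteq> (0::'a)"
  shows "is_circle q (tangent_circle q a z t)"
  unfolding is_circle_def tangent_circle_def
  by (intro disjI1 exI[of _ "t * z"] exI[of _ "(1 - t)\<^sup>2 * a"])
    (use assms in \<open>simp add: GFsub_def power_mult_distrib power2_eq_square\<close>)

lemma tangent_circle_trace_norm:
  fixes a z w t :: 'a
  assumes "t ^ q = t" and za: "z * z ^ q = a"
    and "Some w \<in> tangent_circle q a z t" and wc: "w * w ^ q = c"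
  shows "t * (z ^ q * w + (z ^ q * w) ^ q) = c - a + 2 * t * a"
    and "(z ^ q * w) * (z ^ q * w) ^ q = a * c"
proof -
  have conj_u: "(z ^ q * w) ^ q = z * w ^ q"
    by (simp add: power_mult_distrib conj_conj)
  have circ: "(w - t * z) * (w ^ q - t * z ^ q) = (1 - t)\<^sup>2 * a"
    using assms(1,3) by (simp add: Some_in_tangent_circle_iff)
  have "t * (z ^ q * w + z * w ^ q)
      = w * w ^ q + t\<^sup>2 * (z * z ^ q) - (w - t * z) * (w ^ q - t * z ^ q)"
    by (simp add: algebra_simps power2_eq_square)
  also have "\<dots> = c + t\<^sup>2 * a - (1 - t)\<^sup>2 * a"
    by (simp only: circ za wc)
  also have "\<dots> = c - a + 2 * t * a"
    by (simp add: algebra_simps power2_eq_square)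
  finally show "t * (z ^ q * w + (z ^ q * w) ^ q) = c - a + 2 * t * a"
    by (simp only: conj_u)
  have "(z ^ q * w) * (z * w ^ q) = (z * z ^ q) * (w * w ^ q)"
    by (simp only: mult_ac)
  then show "(z ^ q * w) * (z ^ q * w) ^ q = a * c"
    by (simp only: conj_u za wc)
qed

lemma tangent_circle_common_point_eq:
  fixes a c r t z w :: 'a
  assumes tq: "t ^ q = t" and "t \<noteq> 0" and za: "z * z ^ q = a"
    and rq: "r ^ q = r" and tr: "2 * t * r = c - a + 2 * t * a" and r: "r\<^sup>2 = a * c"
    and w: "Some w \<in> tangent_circle q a z t" and wc: "w * w ^ q = c"
  shows "z ^ q * w = r"
proof -
  note trace_norm = tangent_circle_trace_norm[OF tq za w wc]
  have "t * (z ^ q * w + (z ^ q * w) ^ q) = 2 * t * r"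
    using trace_norm(1) tr by simp
  also have "\<dots> = t * (2 * r)"
    by (simp add: mult_ac)
  finally have "z ^ q * w + (z ^ q * w) ^ q = 2 * r"
    using \<open>t \<noteq> 0\<close> by simp
  moreover have "(z ^ q * w) * (z ^ q * w) ^ q = r\<^sup>2"
    using trace_norm(2) r by simp
  ultimately show ?thesis
    using eq_of_trace_norm rq by blast
qed

lemma tangent_circle_common_point:
  fixes a c r t z w :: 'a
  assumes tq: "t ^ q = t" and "a \<noteq> 0" and za: "z * z ^ q = a"
    and rq: "r ^ q = r" and tr: "2 * t * r = c - a + 2 * t * a" and r: "r\<^sup>2 = a * c"
    and zw: "z ^ q * w = r"
  shows "Some w \<in> tangent_circle q a z t" and "w * w ^ q = c"
proof -
  have wz: "z * w ^ q = r"
    using arg_cong[OF zw, of "\<lambda>x. x ^ q"] rq by (simp add: power_mult_distrib conj_conj)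
  have "a * (w * w ^ q) = (z ^ q * w) * (z * w ^ q)"
    unfolding za[symmetric] by (simp only: mult_ac)
  also have "\<dots> = a * c"
    by (simp only: zw wz r[symmetric] power2_eq_square)
  finally show wc: "w * w ^ q = c"
    using \<open>a \<noteq> 0\<close> by simp
  have "(w - t * z) * (w ^ q - t * z ^ q)
      = w * w ^ q - t * (z ^ q * w + z * w ^ q) + t\<^sup>2 * (z * z ^ q)"
    by (simp add: algebra_simps power2_eq_square)
  also have "\<dots> = c - 2 * t * r + t\<^sup>2 * a"
    by (simp add: wc zw wz za)
  also have "\<dots> = (1 - t)\<^sup>2 * a"
    unfolding tr by (simp add: algebra_simps power2_eq_square)
  finally show "Some w \<in> tangent_circle q a z t"
    using tq by (simp add: Some_in_tangent_circle_iff)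
qed

lemma tangent_circle_inter_Bcirc:
  fixes a c r t z :: 'a
  assumes "t ^ q = t" and "t \<noteq> 0" and "a \<noteq> 0" and za: "z * z ^ q = a"
    and "r ^ q = r" and "2 * t * r = c - a + 2 * t * a" and "r\<^sup>2 = a * c"
  shows "tangent_circle q a z t \<inter> Bcirc q c = {Some (r / z ^ q)}"
proof -
  have zq: "z ^ q \<noteq> 0"
    using za \<open>a \<noteq> 0\<close> by auto
  show ?thesis
  proof (intro equalityI subsetI)
    fix P
    assume P: "P \<in> tangent_circle q a z t \<inter> Bcirc q c"
    then obtain w where w: "P = Some w"
      using None_notin_Bcirc by (cases P) auto
    then have "z ^ q * w = r"
      using P tangent_circle_common_point_eq[OF assms(1,2,4-7)] by (simp add: Some_in_Bcirc_iff)
    with w zq show "P \<in> {Some (r / z ^ q)}"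
      by (simp add: eq_divide_eq mult.commute)
  next
    fix P
    assume "P \<in> {Some (r / z ^ q)}"
    moreover have zw: "z ^ q * (r / z ^ q) = r"
      using zq by simp
    ultimately show "P \<in> tangent_circle q a z t \<inter> Bcirc q c"
      using tangent_circle_common_point[OF assms(1,3,4-7) zw] by (simp add: Some_in_Bcirc_iff)
  qed
qed

lemma tangent_circle_inter_own_Bcirc:
  assumes "t ^ q = t" and "t \<noteq> 0" and "a ^ q = a" and "a \<noteq> (0::'a)" and za: "z * z ^ q = a"
  shows "tangent_circle q a z t \<inter> Bcirc q a = {Some z}"
proof -
  have "a / z ^ q = z"
    using za assms(4) by (auto simp: divide_eq_eq)
  then show ?thesis
    using tangent_circle_inter_Bcirc[OF assms(1,2,4,5,3), of a] by (simp add: power2_eq_square)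
qed

lemma tangent_circle_inter_scaled_Bcirc:
  assumes \<nu>q: "\<nu> ^ q = \<nu>" and "\<nu> \<noteq> -1" and aq: "a ^ q = a" and "a \<noteq> (0::'a)"
    and za: "z * z ^ q = a"
  shows "tangent_circle q a z ((1 + \<nu>) / 2) \<inter> Bcirc q (\<nu>\<^sup>2 * a) = {Some (\<nu> * z)}"
proof -
  define t where "t = (1 + \<nu>) / 2"
  have two_t: "2 * t = 1 + \<nu>"
    using two_nonzero by (simp add: t_def)
  have "t \<noteq> 0"
    using \<open>\<nu> \<noteq> -1\<close> unfolding t_def half_sum_eq_iff by simp
  moreover have "2 * t * (\<nu> * a) = \<nu>\<^sup>2 * a - a + 2 * t * a"
    unfolding two_t by (simp add: algebra_simps power2_eq_square)
  moreover have "(\<nu> * a) ^ q = \<nu> * a"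
    by (simp add: power_mult_distrib \<nu>q aq)
  moreover have "(\<nu> * a)\<^sup>2 = a * (\<nu>\<^sup>2 * a)"
    by (simp add: algebra_simps power2_eq_square)
  moreover have "\<nu> * a / z ^ q = \<nu> * z"
    using za \<open>a \<noteq> 0\<close> by (auto simp: divide_eq_eq)
  ultimately show ?thesis
    using tangent_circle_inter_Bcirc[of t a z "\<nu> * a" "\<nu>\<^sup>2 * a"] half_sum_conj_fixed[OF \<nu>q] za
      \<open>a \<noteq> 0\<close> by (simp add: t_def)
qed

lemma tangent_circle_in_tau:
  assumes \<nu>q: "\<nu> ^ q = \<nu>" and "\<nu> \<noteq> 1" and "\<nu> \<noteq> -1" and aq: "a ^ q = a" and "a \<noteq> (0::'a)"
    and b: "b = \<nu>\<^sup>2 * a" and za: "z * z ^ q = a"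
  shows "tangent_circle q a z ((1 + \<nu>) / 2) \<in> tau q a b"
    and "tangent_at (tangent_circle q a z ((1 + \<nu>) / 2)) (Bcirc q a) (Some z)"
    and "tangent_at (tangent_circle q a z ((1 + \<nu>) / 2)) (Bcirc q b) (Some (\<nu> * z))"
proof -
  have tq: "((1 + \<nu>) / 2) ^ q = (1 + \<nu>) / 2"
    using half_sum_conj_fixed[OF \<nu>q] .
  have "(1 + \<nu>) / 2 \<noteq> 1" and "(1 + \<nu>) / 2 \<noteq> 0"
    using assms(2,3) unfolding half_sum_eq_iff by simp_all
  then have "is_circle q (tangent_circle q a z ((1 + \<nu>) / 2))"
    and A: "tangent_circle q a z ((1 + \<nu>) / 2) \<inter> Bcirc q a = {Some z}"
    using tangent_circle_is_circle[OF tq _ aq \<open>a \<noteq> 0\<close>]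
      tangent_circle_inter_own_Bcirc[OF tq _ aq \<open>a \<noteq> 0\<close> za] by auto
  moreover have B: "tangent_circle q a z ((1 + \<nu>) / 2) \<inter> Bcirc q b = {Some (\<nu> * z)}"
    unfolding b using tangent_circle_inter_scaled_Bcirc[OF \<nu>q assms(3) aq \<open>a \<noteq> 0\<close> za] .
  ultimately show "tangent_circle q a z ((1 + \<nu>) / 2) \<in> tau q a b"
    by (auto simp: tau_def tangential_def)
  show "tangent_at (tangent_circle q a z ((1 + \<nu>) / 2)) (Bcirc q a) (Some z)"
    using A by (simp add: tangent_at_def)
  show "tangent_at (tangent_circle q a z ((1 + \<nu>) / 2)) (Bcirc q b) (Some (\<nu> * z))"
    using B by (simp add: tangent_at_def)
qed

lemma circle2_not_tangent_to_two_Bcircs: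
  assumes "s \<noteq> (0::'a)"
    and z: "circle2 q s c \<inter> Bcirc q a = {Some z}" and w: "circle2 q s c \<inter> Bcirc q b = {Some w}"
  shows "a = b"
proof -
  have "Some z \<in> circle2 q s c" and "Some w \<in> circle2 q s c"
    using z w by blast+
  moreover have "s * z ^ q = s ^ q * z" and "s * w ^ q = s ^ q * w"
    using unique_common_point_on_line[OF assms(1) disjI2[OF refl]] z w by blast+
  ultimately have "2 * (s ^ q * z) = c" and "2 * (s ^ q * w) = c"
    by (simp_all add: Some_in_circle2_iff mult.commute)
  then have eq: "(2 * s ^ q) * z = (2 * s ^ q) * w"
    by (simp only: mult.assoc)
  have "2 * s ^ q \<noteq> 0"
    using assms(1) two_nonzero by simp
  from mult_left_cancel[OF this] eq have "z = w"
    by blast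
  moreover have "Some z \<in> Bcirc q a" and "Some w \<in> Bcirc q b"
    using z w by blast+
  ultimately show ?thesis
    by (simp add: Some_in_Bcirc_iff)
qed

lemma circle1_tangent_eq_tangent_circle:
  assumes "s \<noteq> (0::'a)" and "a \<noteq> 0" and za: "z * z ^ q = a"
    and z: "circle1 q s c \<inter> Bcirc q a = {Some z}"
  obtains t where "t ^ q = t" and "s = t * z" and "circle1 q s c = tangent_circle q a z t"
proof
  have "z \<noteq> 0"
    using za assms(2) by auto
  define t where "t = s / z"
  show tq: "t ^ q = t"
    unfolding t_def
    by (rule ratio_conj_fixed[OF \<open>z \<noteq> 0\<close> unique_common_point_on_line[OF assms(1) disjI1[OF refl] z]])
  show s: "s = t * z"
    using \<open>z \<noteq> 0\<close> by (simp add: t_def)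
  have "Some z \<in> circle1 q s c"
    using z by blast
  then have "c = (z - s) * (z ^ q - s ^ q)"
    by (simp add: Some_in_circle1_iff)
  also have "\<dots> = (1 - t)\<^sup>2 * (z * z ^ q)"
    unfolding s by (simp add: tq algebra_simps power2_eq_square)
  finally show "circle1 q s c = tangent_circle q a z t"
    by (simp add: tangent_circle_def s za)
qed

lemma tangent_circle_tangent_parameter:
  fixes a t z w \<mu> :: 'a
  assumes tq: "t ^ q = t" and "t \<noteq> 0" and "a \<noteq> 0" and za: "z * z ^ q = a"
    and "\<mu> \<noteq> 1" and "\<mu> \<noteq> -1"
    and kw: "tangent_circle q a z t \<inter> Bcirc q (\<mu>\<^sup>2 * a) = {Some w}"
  shows "t = (1 + \<mu>) / 2 \<or> t = (1 - \<mu>) / 2"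
proof -
  define u where "u = z ^ q * w"
  have "(t * z) * w ^ q = (t * z) ^ q * w"
    using unique_common_point_on_line[OF _ disjI1[OF tangent_circle_def] kw] \<open>t \<noteq> 0\<close> za \<open>a \<noteq> 0\<close>
    by auto
  then have "t * (z * w ^ q) = t * (z ^ q * w)"
    using tq by (simp only: power_mult_distrib mult.assoc)
  then have "z * w ^ q = z ^ q * w"
    using mult_left_cancel[OF \<open>t \<noteq> 0\<close>] by blast
  then have uq: "u ^ q = u"
    by (simp add: u_def power_mult_distrib conj_conj)
  have w: "Some w \<in> tangent_circle q a z t" and "Some w \<in> Bcirc q (\<mu>\<^sup>2 * a)"
    using kw by blast+
  then have "w * w ^ q = \<mu>\<^sup>2 * a"
    by (simp add: Some_in_Bcirc_iff)
  note trace_norm = tangent_circle_trace_norm[OF tq za w this, folded u_def]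
  have "2 * t * u = t * (u + u ^ q)"
    unfolding uq by (simp add: algebra_simps)
  also have "\<dots> = \<mu>\<^sup>2 * a - a + 2 * t * a"
    unfolding trace_norm(1) ..
  finally have "2 * t * u = \<mu>\<^sup>2 * a - a + 2 * t * a" .
  moreover have "u\<^sup>2 = a * (\<mu>\<^sup>2 * a)"
    using trace_norm(2) unfolding uq by (simp only: power2_eq_square)
  ultimately show ?thesis
    using tangent_parameter_cases[OF two_nonzero assms(5,6,3)] by blast
qed

lemma tau_tangent_at_eq_tangent_circle:
  fixes a b z \<mu> :: 'a
  assumes "\<mu> \<noteq> 1" and "\<mu> \<noteq> -1" and "a \<noteq> 0" and za: "z * z ^ q = a" and b: "b = \<mu>\<^sup>2 * a"
    and "k \<in> tau q a b" and kz: "k \<inter> Bcirc q a = {Some z}"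
  shows "k = tangent_circle q a z ((1 + \<mu>) / 2) \<or> k = tangent_circle q a z ((1 - \<mu>) / 2)"
proof -
  have "a \<noteq> b"
  proof
    assume "a = b"
    then have "a * ((\<mu> - 1) * (\<mu> + 1)) = 0"
      using b by (simp add: algebra_simps power2_eq_square)
    then show False
      using assms(1-3) by (simp add: add_eq_0_iff2)
  qed
  have "tangential k (Bcirc q b)"
    using \<open>k \<in> tau q a b\<close> by (simp add: tau_def)
  then obtain w where kw: "k \<inter> Bcirc q b = {Some w}"
    by (rule tangential_BcircE)
  have "is_circle q k"
    using \<open>k \<in> tau q a b\<close> by (simp add: tau_def)
  then show ?thesis
  proof (cases rule: is_circle_cases)
    case (origin c)
    moreover have "Some z \<in> k \<inter> Bcirc q a" and "Some w \<in> k \<inter> Bcirc q b"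
      using kz kw by blast+
    ultimately have "a = c" and "b = c"
      by (auto simp: Some_in_Bcirc_iff)
    with \<open>a \<noteq> b\<close> show ?thesis
      by simp
  next
    case (circle s c)
    obtain t where tq: "t ^ q = t" and s: "s = t * z" and "circle1 q s c = tangent_circle q a z t"
      using circle1_tangent_eq_tangent_circle[OF circle(1) assms(3) za kz[unfolded circle(2)]] .
    then have k: "k = tangent_circle q a z t"
      using circle(2) by simp
    have "t \<noteq> 0"
      using s circle(1) by auto
    from kw have "tangent_circle q a z t \<inter> Bcirc q (\<mu>\<^sup>2 * a) = {Some w}"
      unfolding k b .
    with tangent_circle_tangent_parameter[OF tq \<open>t \<noteq> 0\<close> assms(3) za assms(1,2)] show ?thesis
      unfolding k by blast
  next
    case (line s c)
    then have "a = b"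
      using circle2_not_tangent_to_two_Bcircs kz kw by simp
    with \<open>a \<noteq> b\<close> show ?thesis
      by simp
  qed
qed


lemma exactly_two_tangent_circles:
  fixes a b z \<mu> :: 'a
  assumes \<mu>q: "\<mu> ^ q = \<mu>" and "\<mu> \<noteq> 0" and "\<mu> \<noteq> 1" and "\<mu> \<noteq> -1"
    and aq: "a ^ q = a" and "a \<noteq> 0" and b: "b = \<mu>\<^sup>2 * a" and za: "z * z ^ q = a"
  shows "\<exists>g h. g \<noteq> h \<and>
           {k \<in> tau q a b. tangent_at k (Bcirc q a) (Some z)} = {g, h} \<and>
           tangent_at g (Bcirc q b) (Some (\<mu> * z)) \<and>
           tangent_at h (Bcirc q b) (Some (- \<mu> * z))"
proof -
  define g where "g = tangent_circle q a z ((1 + \<mu>) / 2)"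
  define h where "h = tangent_circle q a z ((1 - \<mu>) / 2)"
  have g: "g \<in> tau q a b" "tangent_at g (Bcirc q a) (Some z)" "tangent_at g (Bcirc q b) (Some (\<mu> * z))"
    unfolding g_def using tangent_circle_in_tau[OF \<mu>q assms(3,4) aq assms(6) b za] by blast+
  have "(- \<mu>) ^ q = - \<mu>" and "- \<mu> \<noteq> 1" and "- \<mu> \<noteq> -1" and "b = (- \<mu>)\<^sup>2 * a"
    using \<mu>q assms(3,4) b by (auto simp: minus_equation_iff)
  from tangent_circle_in_tau[OF this(1-3) aq assms(6) this(4) za]
  have h: "h \<in> tau q a b" "tangent_at h (Bcirc q a) (Some z)" "tangent_at h (Bcirc q b) (Some (- \<mu> * z))"
    unfolding h_def by simp_all
  have "z \<noteq> 0"
    using za \<open>a \<noteq> 0\<close> by auto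
  then have "\<mu> * z \<noteq> - \<mu> * z"
    using \<open>\<mu> \<noteq> 0\<close> two_nonzero by (simp add: eq_neg_iff_add_eq_0 flip: mult_2)
  have "g \<noteq> h"
  proof
    assume "g = h"
    with g(3) h(3) have "{Some (\<mu> * z)} = {Some (- \<mu> * z)}"
      by (simp add: tangent_at_def)
    with \<open>\<mu> * z \<noteq> - \<mu> * z\<close> show False
      by simp
  qed
  moreover have "{k \<in> tau q a b. tangent_at k (Bcirc q a) (Some z)} = {g, h}"
  proof (intro equalityI subsetI)
    fix k
    assume "k \<in> {k \<in> tau q a b. tangent_at k (Bcirc q a) (Some z)}"
    then have "k \<in> tau q a b" and "k \<inter> Bcirc q a = {Some z}"
      by (simp_all add: tangent_at_def)
    from tau_tangent_at_eq_tangent_circle[OF assms(3,4,6) za b this]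
    show "k \<in> {g, h}"
      by (simp add: g_def h_def)
  next
    fix k
    assume "k \<in> {g, h}"
    then show "k \<in> {k \<in> tau q a b. tangent_at k (Bcirc q a) (Some z)}"
      using g(1,2) h(1,2) by blast
  qed
  ultimately show ?thesis
    using g(3) h(3) by (intro exI[of _ g] exI[of _ h] conjI)
qed

end

theorem mainTheorem5:
  fixes p m q :: nat and a b \<mu> z :: "'a::{field,finite}"
  assumes "prime p" and "odd p" and "m \<ge> 1" and "q = p ^ m"
    and "card (UNIV :: 'a set) = q ^ 2"
    and "a \<in> GFsub q" and "a \<noteq> 0" and "b \<in> GFsub q" and "b \<noteq> 0"
    and "\<mu> \<in> GFsub q" and "\<mu> ^ 2 = b / a" and "b / a \<noteq> 1"
    and "Some z \<in> Bcirc q a"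
  shows "\<exists>g h. g \<noteq> h \<and>
           {k \<in> tau q a b. tangent_at k (Bcirc q a) (Some z)} = {g, h} \<and>
           tangent_at g (Bcirc q b) (Some (\<mu> * z)) \<and>
           tangent_at h (Bcirc q b) (Some (- \<mu> * z))"
proof -
  have conj: "field_conjugation TYPE('a) q"
    using field_conjugation_of_card[OF assms(1,2,4,5)] .
  have "a ^ q = a" and "\<mu> ^ q = \<mu>"
    using assms(6,10) by (simp_all add: GFsub_def)
  moreover have "z * z ^ q = a"
    using assms(13) by (simp add: field_conjugation.Some_in_Bcirc_iff[OF conj])
  moreover have "b = \<mu>\<^sup>2 * a"
    using assms(7,11) by simp
  moreover have "\<mu> \<noteq> 0" and "\<mu> \<noteq> 1" and "\<mu> \<noteq> -1"
    using assms(7,9,11,12) by auto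
  ultimately show ?thesis
    using field_conjugation.exactly_two_tangent_circles[OF conj] assms(7) by blast
qed

end
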